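(* Let $\rho:E\to B$ be a stream covering. (1) $E$ is path-ordered if and only if $B$ is path-ordered. (2) For each $e\in E$, every homotopy through dipaths on $B$ starting at $\rho(e)$ (i.e. a continuous $H:[0,1]\times[0,1]\to B$ such that each $H(s,-)$ is a dipath, with $H(0,0)=\rho(e)$) lifts under $\rho$ to a unique homotopy through dipaths $\tilde H$ on $E$ with $\rho\circ\tilde H=H$ and $\tilde H(0,0)=e$; likewise for homotopies ending at $\rho(e)$ (with $(0,0)$ replaced by $(0,1)$).
   Context: Streams: a circulation on a space $X$ assigns to each open $V\subset X$ a preorder $\leqslant_V$ such that for every collection $\mathcal{O}$ of open sets, $\leqslant_{\bigcup\mathcal{O}}$ is the preorder with smallest graph containing $\bigcup_{V\in\mathcal{O}}\mathrm{graph}(\leqslant_V)$; a stream is a space with a circulation; a stream map $f:X\to Y$ is continuous with $f(x)\leqslant_V f(y)$ whenever $x\leqslant_{f^{-1}V}y$. An open substream of $X$ is an open $V$ with circulation $W\mapsto\leqslant_W$. A stream covering is a surjective stream map $\rho:E\to B$ such that $B$ is covered by open substreams whose preimages are disjoint unions of open substreams each mapped by $\rho$ isomorphically (as streams) onto the corresponding open substream. $\vec\square[1]$ is $[0,1]$ with circulation $x\leqslant_V y$ iff $x\le y$ and $[x,y]\subset V$; a dipath on $X$ is a stream map $\vec\square[1]\to X$. $X$ is path-ordered if whenever $V\subset X$ is open and $x\leqslant_V y$ there is a dipath from $x$ to $y$ with image in $V$. *)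

theory Defs
  imports "HOL-Analysis.Analysis"
begin

text \<open>A stream: an underlying topological space together with an assignment
  of a relation (the graph of the preorder) to each set; only values on open sets matter.\<close>
type_synonym 'a strm = "'a topology \<times> ('a set \<Rightarrow> ('a \<times> 'a) set)"

definition preorder_graph :: "'a set \<Rightarrow> ('a \<times> 'a) set \<Rightarrow> bool" where
  "preorder_graph V R \<longleftrightarrow> R \<subseteq> V \<times> V \<and> (\<forall>x\<in>V. (x, x) \<in> R) \<and> trans R"

definition circulation :: "'a topology \<Rightarrow> ('a set \<Rightarrow> ('a \<times> 'a) set) \<Rightarrow> bool" where
  "circulation X C \<longleftrightarrow>
     (\<forall>V. openin X V \<longrightarrow> preorder_graph V (C V)) \<and>
     (\<forall>\<O>. (\<forall>V\<in>\<O>. openin X V) \<longrightarrow>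
        C (\<Union>\<O>) = \<Inter>{R. preorder_graph (\<Union>\<O>) R \<and> (\<Union>V\<in>\<O>. C V) \<subseteq> R})"

definition is_stream :: "'a strm \<Rightarrow> bool" where
  "is_stream S \<longleftrightarrow> circulation (fst S) (snd S)"

definition stream_map :: "'a strm \<Rightarrow> 'b strm \<Rightarrow> ('a \<Rightarrow> 'b) \<Rightarrow> bool" where
  "stream_map S T f \<longleftrightarrow> continuous_map (fst S) (fst T) f \<and>
     (\<forall>V. openin (fst T) V \<longrightarrow>
        (\<forall>x y. (x, y) \<in> snd S (f -` V \<inter> topspace (fst S)) \<longrightarrow> (f x, f y) \<in> snd T V))"

text \<open>Open substream: open V with circulation W \<mapsto> \<le>_W (W open in V).\<close>
definition substream :: "'a strm \<Rightarrow> 'a set \<Rightarrow> 'a strm" where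
  "substream S V = (subtopology (fst S) V, snd S)"

definition stream_iso :: "'a strm \<Rightarrow> 'b strm \<Rightarrow> ('a \<Rightarrow> 'b) \<Rightarrow> bool" where
  "stream_iso S T f \<longleftrightarrow> stream_map S T f \<and>
     (\<exists>g. stream_map T S g \<and> (\<forall>x\<in>topspace (fst S). g (f x) = x) \<and>
          (\<forall>y\<in>topspace (fst T). f (g y) = y))"

definition stream_covering :: "'e strm \<Rightarrow> 'b strm \<Rightarrow> ('e \<Rightarrow> 'b) \<Rightarrow> bool" where
  "stream_covering E B \<rho> \<longleftrightarrow> is_stream E \<and> is_stream B \<and>
     stream_map E B \<rho> \<and> \<rho> ` topspace (fst E) = topspace (fst B) \<and>
     (\<exists>\<V>. (\<forall>U\<in>\<V>. openin (fst B) U) \<and> \<Union>\<V> = topspace (fst B) \<and>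
        (\<forall>U\<in>\<V>. \<exists>\<W>. (\<forall>W\<in>\<W>. openin (fst E) W) \<and>
            pairwise disjnt \<W> \<and>
            \<Union>\<W> = {x \<in> topspace (fst E). \<rho> x \<in> U} \<and>
            (\<forall>W\<in>\<W>. stream_iso (substream E W) (substream B U) \<rho>)))"

definition dinterval :: "real strm" where
  "dinterval = (top_of_set {0..1}, \<lambda>V. {(x, y). x \<le> y \<and> {x..y} \<subseteq> V})"

definition dipath :: "'a strm \<Rightarrow> (real \<Rightarrow> 'a) \<Rightarrow> bool" where
  "dipath X p \<longleftrightarrow> stream_map dinterval X p"

definition path_ordered :: "'a strm \<Rightarrow> bool" where
  "path_ordered X \<longleftrightarrow>
     (\<forall>V x y. openin (fst X) V \<and> (x, y) \<in> snd X V \<longrightarrow>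
        (\<exists>p. dipath X p \<and> p 0 = x \<and> p 1 = y \<and> p ` {0..1} \<subseteq> V))"

definition dihomotopy :: "'a strm \<Rightarrow> (real \<times> real \<Rightarrow> 'a) \<Rightarrow> bool" where
  "dihomotopy X H \<longleftrightarrow>
     continuous_map (prod_topology (top_of_set {0..1}) (top_of_set {0..1})) (fst X) H \<and>
     (\<forall>s\<in>{0..1}. dipath X (\<lambda>t. H (s, t)))"

end

theory Submission
  imports Defs
begin

text \<open>
  The sheets
    of a covering are exactly such local isomorphisms.
  \<^item> Path-orderedness passes both ways through sheets, so the local criterion gives part (1).
  \<^item> Unique lifting on connected spaces (sheets over an evenly covered set are equal or disjoint),
    continuous lifts of dipaths are dipaths (Lebesgue number plus subdivision), and continuous maps
    of the unit square lift (glue lifts over small rectangles).  Together these give part (2).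
\<close>

subsection \<open>General topology\<close>

lemma Lebesgue_number_continuous_map:
  fixes S :: "'a::metric_space set"
  assumes S: "compact S" "S \<noteq> {}" and f: "continuous_map (top_of_set S) X f"
    and cover: "\<And>x. x \<in> topspace X \<Longrightarrow> \<exists>U\<in>\<U>. x \<in> U" and opn: "\<And>U. U \<in> \<U> \<Longrightarrow> openin X U"
  shows "\<exists>\<delta>>0. \<forall>T. T \<subseteq> S \<and> diameter T < \<delta> \<longrightarrow> (\<exists>U\<in>\<U>. f ` T \<subseteq> U)"
proof -
  define \<C> where "\<C> = {N. open N \<and> (\<exists>U\<in>\<U>. f ` (S \<inter> N) \<subseteq> U)}"
  have S_cover: "S \<subseteq> \<Union>\<C>"
  proof
    fix x assume x: "x \<in> S"
    then have "f x \<in> topspace X" using continuous_map_image_subset_topspace[OF f] by auto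
    then obtain U where U: "U \<in> \<U>" "f x \<in> U" using cover by blast
    have "openin (top_of_set S) {y \<in> topspace (top_of_set S). f y \<in> U}"
      using f opn[OF U(1)] by (rule openin_continuous_map_preimage)
    then obtain N where "open N" "{y \<in> S. f y \<in> U} = S \<inter> N"
      by (auto simp: openin_open)
    then show "x \<in> \<Union>\<C>" unfolding \<C>_def using x U by blast
  qed
  then have "\<C> \<noteq> {}" using S(2) by blast
  moreover have "\<And>N. N \<in> \<C> \<Longrightarrow> open N" unfolding \<C>_def by blast
  ultimately obtain \<delta> where "0 < \<delta>" and small: "\<And>T. T \<subseteq> S \<Longrightarrow> diameter T < \<delta> \<Longrightarrow> \<exists>N\<in>\<C>. T \<subseteq> N"
    using Lebesgue_number_lemma[OF S(1) _ S_cover] by metis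
  have "\<exists>U\<in>\<U>. f ` T \<subseteq> U" if T: "T \<subseteq> S" "diameter T < \<delta>" for T
  proof -
    obtain N where "N \<in> \<C>" "T \<subseteq> N" using small[OF T] by blast
    then obtain U where "U \<in> \<U>" "f ` (S \<inter> N) \<subseteq> U" unfolding \<C>_def by blast
    then show ?thesis using \<open>T \<subseteq> S\<close> \<open>T \<subseteq> N\<close> by blast
  qed
  then show ?thesis using \<open>0 < \<delta>\<close> by blast
qed

lemma real_interval_subdivision_induct:
  fixes P :: "real \<Rightarrow> real \<Rightarrow> bool"
  assumes "0 < \<eta>" "a \<le> b"
    and small: "\<And>a b. a \<le> b \<Longrightarrow> b - a \<le> \<eta> \<Longrightarrow> P a b"
    and glue: "\<And>a c b. a \<le> c \<Longrightarrow> c \<le> b \<Longrightarrow> P a c \<Longrightarrow> P c b \<Longrightarrow> P a b"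
  shows "P a b"
proof -
  have "\<forall>b. a \<le> b \<and> b - a \<le> real n * \<eta> \<longrightarrow> P a b" for n
  proof (induction n)
    case 0
    show ?case
    proof (intro allI impI)
      fix b assume "a \<le> b \<and> b - a \<le> real 0 * \<eta>"
      then have "b = a" by simp
      then show "P a b" using small[of a a] \<open>0 < \<eta>\<close> by simp
    qed
  next
    case (Suc n)
    show ?case
    proof (intro allI impI)
      fix b assume b: "a \<le> b \<and> b - a \<le> real (Suc n) * \<eta>"
      define c where "c = min b (a + real n * \<eta>)"
      have c: "a \<le> c" "c \<le> b" "c - a \<le> real n * \<eta>" "b - c \<le> \<eta>"
        using b \<open>0 < \<eta>\<close> unfolding c_def by (auto simp: min_def algebra_simps)
      then have "P a c" using Suc.IH by blast
      then show "P a b" using glue[OF c(1,2)] small[OF c(2,4)] by blast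
    qed
  qed
  moreover obtain n where "b - a \<le> real n * \<eta>"
    using ex_less_of_nat_mult[OF \<open>0 < \<eta>\<close>, of "b - a"] less_imp_le by blast
  ultimately show ?thesis using \<open>a \<le> b\<close> by blast
qed

lemma connected_space_locally_all_or_nothing:
  assumes conn: "connected_space X" and T: "T \<subseteq> topspace X" "x0 \<in> T"
    and local: "\<And>x. x \<in> topspace X \<Longrightarrow> \<exists>N. openin X N \<and> x \<in> N \<and> (N \<subseteq> T \<or> N \<inter> T = {})"
  shows "T = topspace X"
proof -
  have "openin X T"
    unfolding openin_subopen[of X T] using local T(1) by blast
  moreover have "openin X (topspace X - T)"
    unfolding openin_subopen[of X "topspace X - T"] using local openin_subset by fast
  ultimately have "closedin X T \<and> openin X T" using T(1) by (simp add: closedin_def)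
  then show ?thesis using conn T(2) unfolding connected_space_clopen_in by blast
qed

lemma continuous_map_glue_closed:
  fixes Q1 Q2 :: "'a::topological_space set"
  assumes "closed Q1" "closed Q2"
    and "continuous_map (top_of_set Q1) X f1" "continuous_map (top_of_set Q2) X f2"
    and "\<And>x. x \<in> Q1 \<inter> Q2 \<Longrightarrow> f1 x = f2 x"
  shows "continuous_map (top_of_set (Q1 \<union> Q2)) X (\<lambda>x. if x \<in> Q1 then f1 x else f2 x)"
proof (rule pasting_lemma_closed[where I = "{True, False}" and T = "\<lambda>b. if b then Q1 else Q2"
      and f = "\<lambda>b. if b then f1 else f2"])
  fix i assume "i \<in> {True, False}"
  show "closedin (top_of_set (Q1 \<union> Q2)) (if i then Q1 else Q2)"
    using assms(1,2) closedin_closed_subset[of _ "Q1 \<union> Q2"] by (auto simp: closedin_closed)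
  show "continuous_map (subtopology (top_of_set (Q1 \<union> Q2)) (if i then Q1 else Q2)) X (if i then f1 else f2)"
    using assms(3,4) by (auto simp: subtopology_subtopology Int_absorb1)
qed (use assms(5) in auto)

lemma topspace_open_subtopology: "openin X W \<Longrightarrow> topspace (subtopology X W) = W"
  by (metis openin_subset topspace_subtopology_subset)

lemma diameter_rectangle_le:
  fixes a b c d :: real
  assumes "a \<le> b" "c \<le> d"
  shows "diameter ({a..b} \<times> {c..d}) \<le> (b - a) + (d - c)"
proof (rule diameter_le)
  show "{a..b} \<times> {c..d} \<noteq> {} \<or> 0 \<le> (b - a) + (d - c)" using assms by simp
  fix x y assume "x \<in> {a..b} \<times> {c..d}" "y \<in> {a..b} \<times> {c..d}"
  then obtain x1 x2 y1 y2 where xy: "x = (x1, x2)" "y = (y1, y2)"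
    and bounds: "x1 \<in> {a..b}" "y1 \<in> {a..b}" "x2 \<in> {c..d}" "y2 \<in> {c..d}" by auto
  have "norm (x - y) = norm (x1 - y1, x2 - y2)" using xy by simp
  also have "\<dots> \<le> norm (x1 - y1) + norm (x2 - y2)" by (rule norm_Pair_le)
  also have "\<dots> \<le> (b - a) + (d - c)" using bounds by (intro add_mono) auto
  finally show "norm (x - y) \<le> (b - a) + (d - c)" .
qed

subsection \<open>Circulations and streams\<close>

lemma circulation_preorder:
  "circulation X C \<Longrightarrow> openin X V \<Longrightarrow> preorder_graph V (C V)"
  by (simp add: circulation_def)

lemma circulation_Union:
  assumes "circulation X C" and "\<forall>V\<in>\<O>. openin X V"
  shows "C (\<Union>\<O>) = \<Inter>{R. preorder_graph (\<Union>\<O>) R \<and> (\<Union>V\<in>\<O>. C V) \<subseteq> R}"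
proof -
  have "\<forall>\<O>. (\<forall>V\<in>\<O>. openin X V) \<longrightarrow>
      C (\<Union>\<O>) = \<Inter>{R. preorder_graph (\<Union>\<O>) R \<and> (\<Union>V\<in>\<O>. C V) \<subseteq> R}"
    using assms(1) unfolding circulation_def by (rule conjunct2)
  then show ?thesis using assms(2) by (elim allE impE)
qed

lemma circulation_least:
  assumes "circulation X C" and "\<forall>V\<in>\<O>. openin X V"
    and "preorder_graph (\<Union>\<O>) P" and "\<forall>V\<in>\<O>. C V \<subseteq> P"
  shows "C (\<Union>\<O>) \<subseteq> P"
proof -
  have "P \<in> {R. preorder_graph (\<Union>\<O>) R \<and> (\<Union>V\<in>\<O>. C V) \<subseteq> R}" using assms(3,4) by blast
  then show ?thesis unfolding circulation_Union[OF assms(1,2)] by (rule Inter_lower)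
qed

lemma circulation_mono:
  assumes C: "circulation X C" and "openin X A" "openin X A'" "A \<subseteq> A'"
  shows "C A \<subseteq> C A'"
proof -
  have "C A \<subseteq> \<Inter>{R. preorder_graph (\<Union>{A, A'}) R \<and> (\<Union>V\<in>{A, A'}. C V) \<subseteq> R}"
    by (rule Inter_greatest) blast
  also have "\<dots> = C (\<Union>{A, A'})" using circulation_Union[OF C, of "{A, A'}"] assms(2,3) by simp
  also have "\<Union>{A, A'} = A'" using assms(4) by blast
  finally show ?thesis .
qed

lemma stream_preorder:
  "is_stream X \<Longrightarrow> openin (fst X) V \<Longrightarrow> preorder_graph V (snd X V)"
  unfolding is_stream_def by (rule circulation_preorder)

lemma stream_rel_trans:
  assumes "is_stream X" "openin (fst X) V" "(x, y) \<in> snd X V" "(y, z) \<in> snd X V"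
  shows "(x, z) \<in> snd X V"
  using stream_preorder[OF assms(1,2)] assms(3,4) unfolding preorder_graph_def by (blast dest: transD)

lemma stream_rel_mono:
  "is_stream X \<Longrightarrow> openin (fst X) A \<Longrightarrow> openin (fst X) A' \<Longrightarrow> A \<subseteq> A' \<Longrightarrow> snd X A \<subseteq> snd X A'"
  unfolding is_stream_def using circulation_mono[of "fst X" "snd X" A A'] by blast

lemma stream_mapD:
  assumes "stream_map S T f" "openin (fst T) V" "(x, y) \<in> snd S (f -` V \<inter> topspace (fst S))"
  shows "(f x, f y) \<in> snd T V"
  using assms unfolding stream_map_def by blast

lemma stream_map_comp:
  assumes f: "stream_map S T f" and g: "stream_map T U g"
  shows "stream_map S U (g \<circ> f)"
  unfolding stream_map_def
proof (intro conjI allI impI)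
  have cf: "continuous_map (fst S) (fst T) f" and cg: "continuous_map (fst T) (fst U) g"
    using f g unfolding stream_map_def by blast+
  then show "continuous_map (fst S) (fst U) (g \<circ> f)" by (rule continuous_map_compose)
  fix V x y assume V: "openin (fst U) V" and xy: "(x, y) \<in> snd S ((g \<circ> f) -` V \<inter> topspace (fst S))"
  have "openin (fst T) (g -` V \<inter> topspace (fst T))"
    using openin_continuous_map_preimage[OF cg V] by (simp add: Collect_conj_eq Int_commute vimage_def)
  moreover have "f -` (g -` V \<inter> topspace (fst T)) \<inter> topspace (fst S) = (g \<circ> f) -` V \<inter> topspace (fst S)"
    using continuous_map_image_subset_topspace[OF cf] by auto
  ultimately have "(f x, f y) \<in> snd T (g -` V \<inter> topspace (fst T))"
    using stream_mapD[OF f] xy by simp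
  then show "((g \<circ> f) x, (g \<circ> f) y) \<in> snd U V"
    using stream_mapD[OF g V] by simp
qed

lemma dipath_iff:
  "dipath X p \<longleftrightarrow> pathin (fst X) p \<and>
    (\<forall>V s t. openin (fst X) V \<and> s \<le> t \<and> {s..t} \<subseteq> {0..1} \<and> p ` {s..t} \<subseteq> V
        \<longrightarrow> (p s, p t) \<in> snd X V)"
proof -
  have "\<And>V s t. ({s..t} \<subseteq> p -` V \<inter> {0..1}) = ({s..t} \<subseteq> {0..1} \<and> p ` {s..t} \<subseteq> V)" by blast
  then show ?thesis
    unfolding dipath_def stream_map_def dinterval_def pathin_def by auto
qed

lemma dipathI:
  assumes "pathin (fst X) p"
    and "\<And>V s t. openin (fst X) V \<Longrightarrow> s \<le> t \<Longrightarrow> {s..t} \<subseteq> {0..1} \<Longrightarrow> p ` {s..t} \<subseteq> V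
        \<Longrightarrow> (p s, p t) \<in> snd X V"
  shows "dipath X p"
  unfolding dipath_iff using assms by blast

lemma dipathD:
  assumes "dipath X p" "openin (fst X) V" "s \<le> t" "{s..t} \<subseteq> {0..1}" "p ` {s..t} \<subseteq> V"
  shows "(p s, p t) \<in> snd X V"
  using assms unfolding dipath_iff by blast

lemma dipath_pathin: "dipath X p \<Longrightarrow> pathin (fst X) p"
  unfolding dipath_iff by blast

lemma dipath_comp: "dipath X p \<Longrightarrow> stream_map X Y f \<Longrightarrow> dipath Y (f \<circ> p)"
  unfolding dipath_def by (rule stream_map_comp)

lemma dipath_const:
  assumes "is_stream X" "x \<in> topspace (fst X)"
  shows "dipath X (\<lambda>_. x)"
proof (rule dipathI)
  show "pathin (fst X) (\<lambda>_. x)" using assms(2) by simp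
  fix V and s t :: real
  assume "openin (fst X) V" "s \<le> t" "(\<lambda>_. x) ` {s..t} \<subseteq> V"
  moreover have "x \<in> V"
  proof -
    have "s \<in> {s..t}" using \<open>s \<le> t\<close> by simp
    then show ?thesis using \<open>(\<lambda>_. x) ` {s..t} \<subseteq> V\<close> by blast
  qed
  ultimately show "(x, x) \<in> snd X V"
    using stream_preorder[OF assms(1)] unfolding preorder_graph_def by blast
qed

subsection \<open>Dipaths and path-orderedness\<close>

text \<open>Concatenation of two paths, traversing each at double speed.  (The library operator
  for this is restricted to topological-space types, whereas streams live on arbitrary types.)\<close>
definition path_join :: "(real \<Rightarrow> 'a) \<Rightarrow> (real \<Rightarrow> 'a) \<Rightarrow> real \<Rightarrow> 'a" where
  "path_join p q = (\<lambda>t. if t \<le> 1/2 then p (2 * t) else q (2 * t - 1))"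

lemma path_join_first: "t \<le> 1/2 \<Longrightarrow> path_join p q t = p (2 * t)"
  by (simp add: path_join_def)

lemma path_join_second:
  assumes "p 1 = q 0" "1/2 \<le> t"
  shows "path_join p q t = q (2 * t - 1)"
proof (cases "t = 1/2")
  case True
  show ?thesis using assms(1) by (simp add: path_join_def True)
qed (use assms(2) in \<open>simp add: path_join_def\<close>)

lemma path_join_image:
  assumes "p ` {0..1} \<subseteq> V" "q ` {0..1} \<subseteq> V"
  shows "path_join p q ` {0..1} \<subseteq> V"
proof
  fix w assume "w \<in> path_join p q ` {0..1}"
  then obtain u where u: "u \<in> {0..1}" "w = path_join p q u" by blast
  show "w \<in> V"
  proof (cases "u \<le> 1/2")
    case True
    then have "2 * u \<in> {0..1}" using u by auto
    then show ?thesis using assms(1) u True by (auto simp: path_join_def)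
  next
    case False
    then have "2 * u - 1 \<in> {0..1}" using u by auto
    then show ?thesis using assms(2) u False by (auto simp: path_join_def)
  qed
qed

lemma pathin_join:
  assumes p: "pathin X p" and q: "pathin X q" and pq: "p 1 = q 0"
  shows "pathin X (path_join p q)"
proof -
  let ?T01 = "top_of_set {0..1::real}"
  have "continuous_map ?T01 X (\<lambda>x. if x \<le> 1/2 then (p \<circ> (\<lambda>t. 2 * t)) x else (q \<circ> (\<lambda>t. 2 * t - 1)) x)"
  proof (intro continuous_map_cases_le continuous_map_compose, force, force)
    show "continuous_map (subtopology ?T01 {x \<in> topspace ?T01. x \<le> 1/2}) ?T01 ((*) 2)"
      by (auto simp: continuous_map_in_subtopology continuous_map_from_subtopology)
    have "continuous_map (subtopology ?T01 {x. 0 \<le> x \<and> x \<le> 1 \<and> 1 \<le> x * 2}) euclideanreal (\<lambda>t. 2 * t - 1)"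
      by (intro continuous_intros) (force intro: continuous_map_from_subtopology)
    then show "continuous_map (subtopology ?T01 {x \<in> topspace ?T01. 1/2 \<le> x}) ?T01 (\<lambda>t. 2 * t - 1)"
      by (force simp: continuous_map_in_subtopology)
    show "(p \<circ> (*) 2) x = (q \<circ> (\<lambda>t. 2 * t - 1)) x" if "x \<in> topspace ?T01" "x = 1/2" for x
    proof -
      from that have "2 * x = 1" "2 * x - 1 = 0" by simp_all
      then show ?thesis using pq by simp
    qed
  qed (use p q in \<open>simp_all add: pathin_def\<close>)
  then show ?thesis unfolding pathin_def path_join_def comp_def .
qed

text \<open>The concatenation of composable dipaths is a dipath: a subinterval lies in one half, where
  the relation comes from p or q, or straddles 1/2 and is split there using transitivity.\<close>
lemma dipath_join:
  assumes X: "is_stream X" and p: "dipath X p" and q: "dipath X q" and pq: "p 1 = q 0"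
  shows "dipath X (path_join p q)"
proof (rule dipathI)
  show "pathin (fst X) (path_join p q)" using dipath_pathin[OF p] dipath_pathin[OF q] pq by (rule pathin_join)
  fix V and s t :: real
  assume V: "openin (fst X) V" and st: "s \<le> t" "{s..t} \<subseteq> {0..1}" and inV: "(path_join p q) ` {s..t} \<subseteq> V"
  have first_half: "(path_join p q a, path_join p q b) \<in> snd X V"
    if "s \<le> a" "a \<le> b" "b \<le> t" "b \<le> 1/2" for a b
  proof -
    have "p ` {2*a..2*b} \<subseteq> V"
    proof (rule image_subsetI)
      fix u assume "u \<in> {2*a..2*b}"
      then have "u/2 \<in> {s..t}" "path_join p q (u/2) = p u"
        using that path_join_first[of "u/2" p q] by auto
      then show "p u \<in> V" using inV by (metis image_subset_iff)
    qed
    then have "(p (2*a), p (2*b)) \<in> snd X V" using that st by (intro dipathD[OF p V]) auto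
    then show ?thesis using that path_join_first[of _ p q] by simp
  qed
  have second_half: "(path_join p q a, path_join p q b) \<in> snd X V"
    if "s \<le> a" "a \<le> b" "b \<le> t" "1/2 \<le> a" for a b
  proof -
    have "q ` {2*a-1..2*b-1} \<subseteq> V"
    proof (rule image_subsetI)
      fix u assume "u \<in> {2*a-1..2*b-1}"
      then have "(u+1)/2 \<in> {s..t}" "path_join p q ((u+1)/2) = q u"
        using that path_join_second[of p q, OF pq, of "(u+1)/2"] by (auto simp: field_simps)
      then show "q u \<in> V" using inV by (metis image_subset_iff)
    qed
    then have "(q (2*a-1), q (2*b-1)) \<in> snd X V" using that st by (intro dipathD[OF q V]) auto
    then show ?thesis using that path_join_second[of p q, OF pq] by simp
  qed
  consider "t \<le> 1/2" | "1/2 \<le> s" | "s < 1/2" "1/2 < t" by linarith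
  then show "(path_join p q s, path_join p q t) \<in> snd X V"
  proof cases
    case 1
    then show ?thesis using first_half[of s t] st(1) by simp
  next
    case 2
    then show ?thesis using second_half[of s t] st(1) by simp
  next
    case 3
    have "(path_join p q s, path_join p q (1/2)) \<in> snd X V" by (rule first_half) (use 3 in auto)
    moreover have "(path_join p q (1/2), path_join p q t) \<in> snd X V" by (rule second_half) (use 3 in auto)
    ultimately show ?thesis by (rule stream_rel_trans[OF X V])
  qed
qed

definition dipath_rel :: "'a strm \<Rightarrow> 'a set \<Rightarrow> ('a \<times> 'a) set" where
  "dipath_rel X V = {(x, y). \<exists>p. dipath X p \<and> p 0 = x \<and> p 1 = y \<and> p ` {0..1} \<subseteq> V}"

lemma dipath_relI: "dipath X p \<Longrightarrow> p ` {0..1} \<subseteq> V \<Longrightarrow> (p 0, p 1) \<in> dipath_rel X V"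
  unfolding dipath_rel_def by blast

lemma path_ordered_iff: "path_ordered X \<longleftrightarrow> (\<forall>V. openin (fst X) V \<longrightarrow> snd X V \<subseteq> dipath_rel X V)"
  unfolding path_ordered_def dipath_rel_def by fast

text \<open>Dipaths inside an open set realise a preorder on it: constant dipaths give reflexivity,
  concatenation gives transitivity.\<close>
lemma dipath_rel_preorder:
  assumes X: "is_stream X" and V: "openin (fst X) V"
  shows "preorder_graph V (dipath_rel X V)"
  unfolding preorder_graph_def
proof (intro conjI ballI)
  show "dipath_rel X V \<subseteq> V \<times> V"
  proof (rule subrelI)
    fix a b assume "(a, b) \<in> dipath_rel X V"
    then obtain p :: "real \<Rightarrow> 'a" where "a = p 0" "b = p 1" "p ` {0..1} \<subseteq> V"
      unfolding dipath_rel_def by blast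
    then show "(a, b) \<in> V \<times> V" by auto
  qed
  fix x assume x: "x \<in> V"
  then have "dipath X (\<lambda>_. x)" using openin_subset[OF V] by (intro dipath_const[OF X]) blast
  moreover have "(\<lambda>_. x) ` {0..1::real} \<subseteq> V" using x by blast
  ultimately show "(x, x) \<in> dipath_rel X V" using dipath_relI[of X "\<lambda>_. x" V] by simp
next
  show "trans (dipath_rel X V)"
  proof (rule transI)
    fix x y z assume xy: "(x, y) \<in> dipath_rel X V" and yz: "(y, z) \<in> dipath_rel X V"
    obtain p where p: "dipath X p" "p 0 = x" "p 1 = y" "p ` {0..1} \<subseteq> V"
      using xy unfolding dipath_rel_def by blast
    obtain q where q: "dipath X q" "q 0 = y" "q 1 = z" "q ` {0..1} \<subseteq> V"
      using yz unfolding dipath_rel_def by blast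
    have "dipath X (path_join p q)" using X p(1) q(1) by (rule dipath_join) (simp add: p q)
    moreover have "path_join p q ` {0..1} \<subseteq> V" using p(4) q(4) by (rule path_join_image)
    moreover have "path_join p q 0 = x" "path_join p q 1 = z"
      using p(2) q(3) by (simp_all add: path_join_def)
    ultimately show "(x, z) \<in> dipath_rel X V"
      using dipath_relI[of X "path_join p q" V] by simp
  qed
qed

text \<open>This follows
  from the minimality clause of a circulation, since dipath_rel X V is a preorder.\<close>
lemma path_ordered_local:
  assumes X: "is_stream X"
    and local: "\<And>V x. openin (fst X) V \<Longrightarrow> x \<in> V \<Longrightarrow>
        \<exists>Q. openin (fst X) Q \<and> x \<in> Q \<and> Q \<subseteq> V \<and> snd X Q \<subseteq> dipath_rel X V"
  shows "path_ordered X"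
  unfolding path_ordered_iff
proof (intro allI impI)
  fix V assume V: "openin (fst X) V"
  define \<O> where "\<O> = {Q. openin (fst X) Q \<and> Q \<subseteq> V \<and> snd X Q \<subseteq> dipath_rel X V}"
  have V_eq: "\<Union>\<O> = V"
  proof
    show "\<Union>\<O> \<subseteq> V" unfolding \<O>_def by blast
    show "V \<subseteq> \<Union>\<O>"
    proof
      fix x assume "x \<in> V"
      then obtain Q where "openin (fst X) Q" "x \<in> Q" "Q \<subseteq> V" "snd X Q \<subseteq> dipath_rel X V"
        using local[OF V] by blast
      then show "x \<in> \<Union>\<O>" unfolding \<O>_def by blast
    qed
  qed
  have "snd X (\<Union>\<O>) \<subseteq> dipath_rel X V"
  proof (rule circulation_least)
    show "circulation (fst X) (snd X)" using X unfolding is_stream_def .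
    show "preorder_graph (\<Union>\<O>) (dipath_rel X V)" unfolding V_eq by (rule dipath_rel_preorder[OF X V])
  qed (auto simp: \<O>_def)
  then show "snd X V \<subseteq> dipath_rel X V" by (simp only: V_eq)
qed

lemma dipath_substream:
  assumes X: "is_stream X" and W: "openin (fst X) W" and pW: "p ` {0..1} \<subseteq> W"
  shows "dipath (substream X W) p \<longleftrightarrow> dipath X p"
proof
  assume p: "dipath (substream X W) p"
  show "dipath X p"
  proof (rule dipathI)
    show "pathin (fst X) p"
      using dipath_pathin[OF p] by (simp add: substream_def pathin_subtopology)
    fix V and s t :: real
    assume V: "openin (fst X) V" and st: "s \<le> t" "{s..t} \<subseteq> {0..1}" "p ` {s..t} \<subseteq> V"
    have VW: "openin (fst (substream X W)) (V \<inter> W)"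
      using V W by (simp add: substream_def openin_open_subtopology openin_Int)
    have "p ` {s..t} \<subseteq> V \<inter> W" using st pW by blast
    then have "(p s, p t) \<in> snd X (V \<inter> W)"
      using dipathD[OF p VW st(1,2)] by (simp add: substream_def)
    then show "(p s, p t) \<in> snd X V"
      using stream_rel_mono[OF X _ V, of "V \<inter> W"] V W by blast
  qed
next
  assume p: "dipath X p"
  show "dipath (substream X W) p"
  proof (rule dipathI)
    show "pathin (fst (substream X W)) p"
      using dipath_pathin[OF p] pW by (auto simp: substream_def pathin_subtopology)
    fix V and s t :: real
    assume "openin (fst (substream X W)) V" "s \<le> t" "{s..t} \<subseteq> {0..1}" "p ` {s..t} \<subseteq> V"
    then show "(p s, p t) \<in> snd (substream X W) V"
      using dipathD[OF p] W by (simp add: substream_def openin_open_subtopology)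
  qed
qed

subsection \<open>Local isomorphisms of open substreams\<close>

definition local_iso :: "'a strm \<Rightarrow> 'a set \<Rightarrow> 'b strm \<Rightarrow> 'b set \<Rightarrow> ('a \<Rightarrow> 'b) \<Rightarrow> ('b \<Rightarrow> 'a) \<Rightarrow> bool" where
  "local_iso X W Y U f g \<longleftrightarrow> openin (fst X) W \<and> openin (fst Y) U \<and>
     stream_map (substream X W) (substream Y U) f \<and> stream_map (substream Y U) (substream X W) g \<and>
     (\<forall>x\<in>W. g (f x) = x) \<and> (\<forall>y\<in>U. f (g y) = y)"

lemma local_iso_sym: "local_iso X W Y U f g \<Longrightarrow> local_iso Y U X W g f"
  unfolding local_iso_def by blast

lemma stream_iso_local_iso:
  assumes "openin (fst X) W" "openin (fst Y) U" "stream_iso (substream X W) (substream Y U) f"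
  shows "\<exists>g. local_iso X W Y U f g"
  using assms unfolding stream_iso_def local_iso_def substream_def fst_conv
  by (simp only: topspace_open_subtopology) blast

lemma local_iso_topspace:
  assumes "local_iso X W Y U f g"
  shows "topspace (fst X) \<inter> W = W" "topspace (fst Y) \<inter> U = U"
  using assms unfolding local_iso_def by (auto dest: openin_subset)

lemma local_iso_openin:
  assumes "local_iso X W Y U f g"
  shows "openin (fst X) W" "openin (fst Y) U"
  using assms unfolding local_iso_def by blast+

lemma local_iso_inverse:
  assumes "local_iso X W Y U f g"
  shows "\<And>x. x \<in> W \<Longrightarrow> g (f x) = x" "\<And>y. y \<in> U \<Longrightarrow> f (g y) = y"
  using assms unfolding local_iso_def by blast+

lemma local_iso_continuous:
  assumes "local_iso X W Y U f g"
  shows "continuous_map (subtopology (fst X) W) (subtopology (fst Y) U) f"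
  using assms unfolding local_iso_def stream_map_def substream_def by simp

lemma local_iso_maps_into:
  assumes iso: "local_iso X W Y U f g" and x: "x \<in> W"
  shows "f x \<in> U"
  using continuous_map_image_subset_topspace[OF local_iso_continuous[OF iso]] x
  by (auto simp: local_iso_topspace[OF iso])

lemma local_iso_open:
  assumes iso: "local_iso X W Y U f g" and V: "openin (fst X) V"
  shows "openin (fst Y) {y \<in> U. g y \<in> V}"
proof -
  have W: "openin (fst X) W" and U: "openin (fst Y) U" using iso unfolding local_iso_def by blast+
  have "openin (subtopology (fst X) W) (W \<inter> V)" using V by (simp add: openin_subtopology_Int2)
  then have "openin (subtopology (fst Y) U) {y \<in> topspace (subtopology (fst Y) U). g y \<in> W \<inter> V}"
    using local_iso_continuous[OF local_iso_sym[OF iso]] by (rule openin_continuous_map_preimage[rotated])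
  moreover have "{y \<in> topspace (subtopology (fst Y) U). g y \<in> W \<inter> V} = {y \<in> U. g y \<in> V}"
    using local_iso_maps_into[OF local_iso_sym[OF iso]] by (auto simp: local_iso_topspace[OF iso])
  ultimately show ?thesis using U by (simp add: openin_open_subtopology)
qed

lemma local_iso_rel:
  assumes iso: "local_iso X W Y U f g" and V: "openin (fst X) V" "V \<subseteq> W"
    and ab: "(a, b) \<in> snd X V"
  shows "(f a, f b) \<in> snd Y {y \<in> U. g y \<in> V}"
proof -
  have W: "openin (fst X) W" and U: "openin (fst Y) U"
    and fmap: "stream_map (substream X W) (substream Y U) f" using iso unfolding local_iso_def by blast+
  let ?V' = "{y \<in> U. g y \<in> V}"
  have "openin (fst (substream Y U)) ?V'"
    using local_iso_open[OF iso V(1)] U by (simp add: substream_def openin_open_subtopology)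
  moreover have "f -` ?V' \<inter> topspace (fst (substream X W)) = V"
    using V(2) local_iso_maps_into[OF iso] local_iso_inverse[OF iso]
    by (auto simp: substream_def local_iso_topspace[OF iso])
  ultimately show ?thesis
    using stream_mapD[OF fmap, of ?V' a b] ab by (simp add: substream_def)
qed

lemma local_iso_dipath:
  assumes X: "is_stream X" and Y: "is_stream Y" and iso: "local_iso X W Y U f g"
    and p: "dipath X p" and pW: "p ` {0..1} \<subseteq> W"
  shows "dipath Y (f \<circ> p)"
proof -
  have W: "openin (fst X) W" and U: "openin (fst Y) U"
    and fmap: "stream_map (substream X W) (substream Y U) f" using iso unfolding local_iso_def by blast+
  have fpU: "(f \<circ> p) ` {0..1} \<subseteq> U" using pW local_iso_maps_into[OF iso] by auto
  have "dipath (substream X W) p" using p dipath_substream[OF X W pW] by blast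
  then have "dipath (substream Y U) (f \<circ> p)" using fmap by (rule dipath_comp)
  then show ?thesis using dipath_substream[OF Y U fpU] by blast
qed

subsection \<open>Stream coverings\<close>

locale covering =
  fixes E :: "'e strm" and B :: "'b strm" and \<rho> :: "'e \<Rightarrow> 'b"
  assumes covering: "stream_covering E B \<rho>"
begin

lemma stream_E: "is_stream E" and stream_B: "is_stream B"
  and rho_stream_map: "stream_map E B \<rho>" and rho_onto: "\<rho> ` topspace (fst E) = topspace (fst B)"
  using covering unfolding stream_covering_def by simp_all

abbreviation sheet :: "'e set \<Rightarrow> 'b set \<Rightarrow> ('b \<Rightarrow> 'e) \<Rightarrow> bool" where
  "sheet W U g \<equiv> local_iso E W B U \<rho> g"

definition evenly_covered :: "'b set \<Rightarrow> bool" where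
  "evenly_covered U \<longleftrightarrow> openin (fst B) U \<and>
     (\<exists>\<W>. (\<forall>W\<in>\<W>. \<exists>g. sheet W U g) \<and> pairwise disjnt \<W> \<and> \<Union>\<W> = {x \<in> topspace (fst E). \<rho> x \<in> U})"

lemma evenly_covered_nbhd:
  assumes b: "b \<in> topspace (fst B)"
  shows "\<exists>U. evenly_covered U \<and> b \<in> U"
proof -
  have "\<exists>\<V>. (\<forall>U\<in>\<V>. openin (fst B) U) \<and> \<Union>\<V> = topspace (fst B) \<and>
        (\<forall>U\<in>\<V>. \<exists>\<W>. (\<forall>W\<in>\<W>. openin (fst E) W) \<and> pairwise disjnt \<W> \<and>
            \<Union>\<W> = {x \<in> topspace (fst E). \<rho> x \<in> U} \<and>
            (\<forall>W\<in>\<W>. stream_iso (substream E W) (substream B U) \<rho>))"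
    using covering unfolding stream_covering_def by (elim conjE)
  then obtain \<V> where \<V>: "\<forall>U\<in>\<V>. openin (fst B) U" "\<Union>\<V> = topspace (fst B)"
    and sheets: "\<forall>U\<in>\<V>. \<exists>\<W>. (\<forall>W\<in>\<W>. openin (fst E) W) \<and> pairwise disjnt \<W> \<and>
            \<Union>\<W> = {x \<in> topspace (fst E). \<rho> x \<in> U} \<and>
            (\<forall>W\<in>\<W>. stream_iso (substream E W) (substream B U) \<rho>)"
    by (elim exE conjE)
  obtain U where U: "U \<in> \<V>" "b \<in> U" using b \<V>(2) by blast
  have U_open: "openin (fst B) U" using \<V>(1) U(1) by blast
  have "\<exists>\<W>. (\<forall>W\<in>\<W>. openin (fst E) W) \<and> pairwise disjnt \<W> \<and>
            \<Union>\<W> = {x \<in> topspace (fst E). \<rho> x \<in> U} \<and>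
            (\<forall>W\<in>\<W>. stream_iso (substream E W) (substream B U) \<rho>)"
    using sheets U(1) by (rule bspec)
  then obtain \<W> where \<W>: "\<forall>W\<in>\<W>. openin (fst E) W" "pairwise disjnt \<W>"
      "\<Union>\<W> = {x \<in> topspace (fst E). \<rho> x \<in> U}" "\<forall>W\<in>\<W>. stream_iso (substream E W) (substream B U) \<rho>"
    by (elim exE conjE)
  have "\<forall>W\<in>\<W>. \<exists>g. sheet W U g"
  proof
    fix W assume "W \<in> \<W>"
    then show "\<exists>g. sheet W U g" using \<W>(1,4) U_open by (intro stream_iso_local_iso) auto
  qed
  then have "evenly_covered U"
    unfolding evenly_covered_def using U_open \<W>(2,3) by (intro conjI exI[of _ \<W>])
  then show ?thesis using U(2) by blast
qed

lemma sheet_over: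
  assumes U: "evenly_covered U" and e: "e \<in> topspace (fst E)" "\<rho> e \<in> U"
  shows "\<exists>W g. sheet W U g \<and> e \<in> W"
proof -
  obtain \<W> where \<W>: "\<forall>W\<in>\<W>. \<exists>g. sheet W U g" "pairwise disjnt \<W>"
      "\<Union>\<W> = {x \<in> topspace (fst E). \<rho> x \<in> U}"
    using U unfolding evenly_covered_def by (elim conjE exE)
  obtain W where "W \<in> \<W>" "e \<in> W" using e \<W>(3) by blast
  then show ?thesis using \<W>(1) by blast
qed

lemma sheet_nbhd:
  assumes "e \<in> topspace (fst E)"
  shows "\<exists>W U g. sheet W U g \<and> e \<in> W"
proof -
  have "\<rho> e \<in> topspace (fst B)" using assms rho_onto by blast
  then obtain U where "evenly_covered U" "\<rho> e \<in> U" using evenly_covered_nbhd by blast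
  then show ?thesis using sheet_over assms by blast
qed

lemma separating_sheets:
  assumes U: "evenly_covered U" and xy: "x \<in> topspace (fst E)" "y \<in> topspace (fst E)" "\<rho> x \<in> U" "\<rho> y \<in> U"
  obtains W1 g1 W2 g2 where "sheet W1 U g1" "sheet W2 U g2" "x \<in> W1" "y \<in> W2"
    "W1 = W2 \<or> W1 \<inter> W2 = {}"
proof -
  obtain \<W> where \<W>: "\<forall>W\<in>\<W>. \<exists>g. sheet W U g" "pairwise disjnt \<W>"
      "\<Union>\<W> = {x \<in> topspace (fst E). \<rho> x \<in> U}"
    using U unfolding evenly_covered_def by (elim conjE exE)
  obtain W1 W2 where W: "W1 \<in> \<W>" "W2 \<in> \<W>" "x \<in> W1" "y \<in> W2" using xy \<W>(3) by blast
  obtain g1 g2 where "sheet W1 U g1" "sheet W2 U g2" using \<W>(1) W(1,2) by blast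
  moreover have "W1 = W2 \<or> W1 \<inter> W2 = {}"
    using \<W>(2) W(1,2) unfolding pairwise_def disjnt_def by blast
  ultimately show ?thesis using that W(3,4) by blast
qed

lemma sheet_inj:
  assumes "sheet W U g" "x \<in> W" "y \<in> W" "\<rho> x = \<rho> y"
  shows "x = y"
proof -
  have "x = g (\<rho> x)" using local_iso_inverse(1)[OF assms(1,2)] by simp
  also have "\<dots> = y" using local_iso_inverse(1)[OF assms(1,3)] assms(4) by simp
  finally show ?thesis .
qed

text \<open>Path-orderedness lifts from B to E: a relation inside a sheet is pushed down to B,
  realised there by a dipath, and the dipath is pulled back through the sheet.\<close>
lemma path_ordered_up:
  assumes po: "path_ordered B"
  shows "path_ordered E"
proof (rule path_ordered_local[OF stream_E])
  fix V x assume V: "openin (fst E) V" and x: "x \<in> V"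
  obtain W U g where sh: "sheet W U g" and xW: "x \<in> W"
    using sheet_nbhd x openin_subset[OF V] by blast
  have WV: "openin (fst E) (W \<inter> V)" using local_iso_openin(1)[OF sh] V by (rule openin_Int)
  have "snd E (W \<inter> V) \<subseteq> dipath_rel E V"
  proof (rule subrelI)
    fix a b assume ab: "(a, b) \<in> snd E (W \<inter> V)"
    have a: "a \<in> W \<inter> V"
      using stream_preorder[OF stream_E WV] ab unfolding preorder_graph_def by blast
    let ?V' = "{y \<in> U. g y \<in> W \<inter> V}"
    have "(\<rho> a, \<rho> b) \<in> snd B ?V'" using local_iso_rel[OF sh WV _ ab] by blast
    moreover have "openin (fst B) ?V'" by (rule local_iso_open[OF sh WV])
    ultimately have "\<exists>q. dipath B q \<and> q 0 = \<rho> a \<and> q 1 = \<rho> b \<and> q ` {0..1} \<subseteq> ?V'"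
      using po unfolding path_ordered_def by blast
    then obtain q where q: "dipath B q" "q 0 = \<rho> a" "q 1 = \<rho> b" "q ` {0..1} \<subseteq> ?V'"
      by (elim exE conjE)
    have "dipath E (g \<circ> q)"
      using local_iso_dipath[OF stream_B stream_E local_iso_sym[OF sh] q(1)] q(4) by blast
    moreover have "(g \<circ> q) ` {0..1} \<subseteq> V" using q(4) by auto
    moreover have "(g \<circ> q) 0 = a" "(g \<circ> q) 1 = b"
      using q(2,3) local_iso_inverse(1)[OF sh] a stream_preorder[OF stream_E WV] ab
      unfolding preorder_graph_def by auto
    ultimately show "(a, b) \<in> dipath_rel E V" using dipath_relI[of E "g \<circ> q" V] by simp
  qed
  then show "\<exists>Q. openin (fst E) Q \<and> x \<in> Q \<and> Q \<subseteq> V \<and> snd E Q \<subseteq> dipath_rel E V"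
    using WV xW x by blast
qed

text \<open>Path-orderedness descends from E to B: a relation in B is lifted through a sheet,
  realised in E by a dipath, and the dipath is projected by \<rho>.\<close>
lemma path_ordered_down:
  assumes po: "path_ordered E"
  shows "path_ordered B"
proof (rule path_ordered_local[OF stream_B])
  fix V y assume V: "openin (fst B) V" and y: "y \<in> V"
  obtain e where e: "e \<in> topspace (fst E)" "y = \<rho> e"
    using y openin_subset[OF V] rho_onto by blast
  obtain W U g where sh: "sheet W U g" and eW: "e \<in> W" using sheet_nbhd e(1) by blast
  have yU: "y \<in> U" using local_iso_maps_into[OF sh eW] e(2) by simp
  have UV: "openin (fst B) (U \<inter> V)" using local_iso_openin(2)[OF sh] V by (rule openin_Int)
  have "snd B (U \<inter> V) \<subseteq> dipath_rel B V"
  proof (rule subrelI)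
    fix a b assume ab: "(a, b) \<in> snd B (U \<inter> V)"
    have ab_in: "a \<in> U" "b \<in> U"
      using stream_preorder[OF stream_B UV] ab unfolding preorder_graph_def by blast+
    let ?V'' = "{x \<in> W. \<rho> x \<in> U \<inter> V}"
    have "(g a, g b) \<in> snd E ?V''" using local_iso_rel[OF local_iso_sym[OF sh] UV _ ab] by blast
    moreover have "openin (fst E) ?V''" by (rule local_iso_open[OF local_iso_sym[OF sh] UV])
    ultimately have "\<exists>p. dipath E p \<and> p 0 = g a \<and> p 1 = g b \<and> p ` {0..1} \<subseteq> ?V''"
      using po unfolding path_ordered_def by blast
    then obtain p where p: "dipath E p" "p 0 = g a" "p 1 = g b" "p ` {0..1} \<subseteq> ?V''"
      by (elim exE conjE)
    have "dipath B (\<rho> \<circ> p)" using p(1) rho_stream_map by (rule dipath_comp)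
    moreover have "(\<rho> \<circ> p) ` {0..1} \<subseteq> V" using p(4) by auto
    moreover have "(\<rho> \<circ> p) 0 = a" "(\<rho> \<circ> p) 1 = b"
      using p(2,3) local_iso_inverse(2)[OF sh] ab_in by auto
    ultimately show "(a, b) \<in> dipath_rel B V" using dipath_relI[of B "\<rho> \<circ> p" V] by simp
  qed
  then show "\<exists>Q. openin (fst B) Q \<and> y \<in> Q \<and> Q \<subseteq> V \<and> snd B Q \<subseteq> dipath_rel B V"
    using UV yU y by blast
qed

text \<open>Their values lie in sheets over a common evenly covered set; if the
  sheets coincide, injectivity of \<rho> on the sheet forces agreement, otherwise they are disjoint.\<close>
lemma lifts_agree_locally:
  assumes f1: "continuous_map X (fst E) f1" and f2: "continuous_map X (fst E) f2"
    and same: "\<And>x. x \<in> topspace X \<Longrightarrow> \<rho> (f1 x) = \<rho> (f2 x)" and x: "x \<in> topspace X"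
  shows "\<exists>N. openin X N \<and> x \<in> N \<and>
    (N \<subseteq> {z \<in> topspace X. f1 z = f2 z} \<or> N \<inter> {z \<in> topspace X. f1 z = f2 z} = {})"
proof -
  have fx: "f1 x \<in> topspace (fst E)" "f2 x \<in> topspace (fst E)"
    using x continuous_map_image_subset_topspace[OF f1] continuous_map_image_subset_topspace[OF f2]
    by blast+
  then have "\<rho> (f1 x) \<in> topspace (fst B)" using rho_onto by blast
  then obtain U where U: "evenly_covered U" "\<rho> (f1 x) \<in> U" using evenly_covered_nbhd by blast
  then have "\<rho> (f2 x) \<in> U" using same[OF x] by simp
  then obtain W1 g1 W2 g2 where sh: "sheet W1 U g1" "sheet W2 U g2"
      and in_W: "f1 x \<in> W1" "f2 x \<in> W2" and W12: "W1 = W2 \<or> W1 \<inter> W2 = {}"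
    using separating_sheets[OF U(1) fx U(2)] by blast
  define N where "N = {z \<in> topspace X. f1 z \<in> W1} \<inter> {z \<in> topspace X. f2 z \<in> W2}"
  have "openin X N" unfolding N_def
    using openin_continuous_map_preimage[OF f1 local_iso_openin(1)[OF sh(1)]]
      openin_continuous_map_preimage[OF f2 local_iso_openin(1)[OF sh(2)]] by (rule openin_Int)
  moreover have "x \<in> N" unfolding N_def using x in_W by blast
  moreover have "N \<subseteq> {z \<in> topspace X. f1 z = f2 z} \<or> N \<inter> {z \<in> topspace X. f1 z = f2 z} = {}"
    using W12
  proof
    assume "W1 = W2"
    have "f1 z = f2 z" if "z \<in> N" for z
      using sheet_inj[OF sh(1)] same that \<open>W1 = W2\<close> unfolding N_def by simp
    then show ?thesis unfolding N_def by blast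
  next
    assume disj: "W1 \<inter> W2 = {}"
    have "f1 z \<noteq> f2 z" if "z \<in> N" for z
    proof
      assume "f1 z = f2 z"
      moreover have "f1 z \<in> W1" "f2 z \<in> W2" using that unfolding N_def by simp_all
      ultimately show False using disj by auto
    qed
    then show ?thesis by blast
  qed
  ultimately show ?thesis by blast
qed

text \<open>Unique lifting: two continuous lifts of the same map on a connected space that agree
  at one point agree everywhere, since their agreement set is open and closed.\<close>
lemma lifts_unique:
  assumes conn: "connected_space X"
    and f1: "continuous_map X (fst E) f1" and f2: "continuous_map X (fst E) f2"
    and same: "\<And>x. x \<in> topspace X \<Longrightarrow> \<rho> (f1 x) = \<rho> (f2 x)"
    and x0: "x0 \<in> topspace X" "f1 x0 = f2 x0"
  shows "\<forall>x\<in>topspace X. f1 x = f2 x"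
proof -
  have "{z \<in> topspace X. f1 z = f2 z} = topspace X"
  proof (rule connected_space_locally_all_or_nothing[OF conn])
    show "{z \<in> topspace X. f1 z = f2 z} \<subseteq> topspace X" "x0 \<in> {z \<in> topspace X. f1 z = f2 z}"
      using x0 by auto
  qed (rule lifts_agree_locally[OF f1 f2 same])
  then show ?thesis by blast
qed

lemma lift_rel_in_sheet:
  assumes sh: "sheet W U g" and V: "openin (fst E) V" and p: "dipath B p"
    and ab: "a \<le> b" "{a..b} \<subseteq> {0..1}"
    and along: "\<And>u. u \<in> {a..b} \<Longrightarrow> \<rho> (p' u) = p u \<and> p' u \<in> W \<inter> V"
  shows "(p' a, p' b) \<in> snd E V"
proof -
  have WV: "openin (fst E) (W \<inter> V)" using local_iso_openin(1)[OF sh] V by (rule openin_Int)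
  let ?V' = "{y \<in> U. g y \<in> W \<inter> V}"
  have g_back: "g (p u) = p' u" if "u \<in> {a..b}" for u
    using along[OF that] local_iso_inverse(1)[OF sh] by force
  have "p ` {a..b} \<subseteq> ?V'"
    using along g_back local_iso_maps_into[OF sh] by force
  then have "(p a, p b) \<in> snd B ?V'" by (rule dipathD[OF p local_iso_open[OF sh WV] ab])
  then have "(g (p a), g (p b)) \<in> snd E {x \<in> W. \<rho> x \<in> ?V'}"
    using local_iso_rel[OF local_iso_sym[OF sh] local_iso_open[OF sh WV]] by blast
  moreover have "{x \<in> W. \<rho> x \<in> ?V'} = W \<inter> V"
    using local_iso_maps_into[OF sh] local_iso_inverse(1)[OF sh] by auto
  moreover have "g (p a) = p' a" "g (p b) = p' b" using g_back ab(1) by auto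
  moreover have "snd E (W \<inter> V) \<subseteq> snd E V" using stream_rel_mono[OF stream_E WV V] by blast
  ultimately show ?thesis by auto
qed

text \<open>A continuous lift of a dipath is a dipath.  By a Lebesgue number for the sheets,
  short subintervals lift inside a single sheet; transitivity chains them together.\<close>
lemma dipath_lift:
  assumes cp: "pathin (fst E) p'" and p: "dipath B p"
    and lift: "\<And>t. t \<in> {0..1} \<Longrightarrow> \<rho> (p' t) = p t"
  shows "dipath E p'"
proof (rule dipathI[OF cp])
  fix V and s t :: real
  assume V: "openin (fst E) V" and st: "s \<le> t" "{s..t} \<subseteq> {0..1}" and inV: "p' ` {s..t} \<subseteq> V"
  have cover: "\<And>e. e \<in> topspace (fst E) \<Longrightarrow> \<exists>W\<in>{W. \<exists>U g. sheet W U g}. e \<in> W"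
    using sheet_nbhd by blast
  have opn: "\<And>W. W \<in> {W. \<exists>U g. sheet W U g} \<Longrightarrow> openin (fst E) W"
    using local_iso_openin(1) by blast
  have cp': "continuous_map (top_of_set {0..1}) (fst E) p'" using cp unfolding pathin_def .
  obtain \<delta> where "0 < \<delta>"
    and small: "\<forall>T. T \<subseteq> {0..1} \<and> diameter T < \<delta> \<longrightarrow> (\<exists>W\<in>{W. \<exists>U g. sheet W U g}. p' ` T \<subseteq> W)"
    using Lebesgue_number_continuous_map[OF compact_Icc _ cp' cover opn] by auto
  have short: "(p' a, p' b) \<in> snd E V" if ab: "s \<le> a" "a \<le> b" "b \<le> t" "b - a \<le> \<delta>/2" for a b
  proof -
    have "diameter {a..b} < \<delta>" using ab \<open>0 < \<delta>\<close> by simp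
    moreover have ab01: "{a..b} \<subseteq> {0..1}" using ab st by auto
    ultimately obtain W U g where sh: "sheet W U g" and pW: "p' ` {a..b} \<subseteq> W"
      using small by blast
    show ?thesis
    proof (rule lift_rel_in_sheet[OF sh V p ab(2) ab01])
      fix u assume "u \<in> {a..b}"
      then show "\<rho> (p' u) = p u \<and> p' u \<in> W \<inter> V" using lift ab01 pW inV ab by auto
    qed
  qed
  have "s \<le> s \<longrightarrow> t \<le> t \<longrightarrow> (p' s, p' t) \<in> snd E V"
  proof (rule real_interval_subdivision_induct[where \<eta> = "\<delta>/2" and P = "\<lambda>a b. s \<le> a \<longrightarrow> b \<le> t \<longrightarrow> (p' a, p' b) \<in> snd E V"])
    show "0 < \<delta>/2" "s \<le> t" using \<open>0 < \<delta>\<close> st(1) by simp_all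
  next
    fix a b :: real assume "a \<le> b" "b - a \<le> \<delta>/2"
    then show "s \<le> a \<longrightarrow> b \<le> t \<longrightarrow> (p' a, p' b) \<in> snd E V" using short by blast
  next
    fix a c b :: real
    assume "a \<le> c" "c \<le> b" and "s \<le> a \<longrightarrow> c \<le> t \<longrightarrow> (p' a, p' c) \<in> snd E V"
      and "s \<le> c \<longrightarrow> b \<le> t \<longrightarrow> (p' c, p' b) \<in> snd E V"
    then show "s \<le> a \<longrightarrow> b \<le> t \<longrightarrow> (p' a, p' b) \<in> snd E V"
      using stream_rel_trans[OF stream_E V] by fastforce
  qed
  then show "(p' s, p' t) \<in> snd E V" by simp
qed

definition lifts_on :: "('a::topological_space \<Rightarrow> 'b) \<Rightarrow> 'a set \<Rightarrow> bool" where
  "lifts_on H Q \<longleftrightarrow> (\<forall>q0\<in>Q. \<forall>e\<in>topspace (fst E). \<rho> e = H q0 \<longrightarrow>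
     (\<exists>f. continuous_map (top_of_set Q) (fst E) f \<and> (\<forall>q\<in>Q. \<rho> (f q) = H q) \<and> f q0 = e))"

lemma lifts_on_evenly_covered:
  assumes U: "evenly_covered U" and HU: "H ` Q \<subseteq> U"
    and cH: "continuous_map (top_of_set Q) (fst B) H"
  shows "lifts_on H Q"
  unfolding lifts_on_def
proof (intro ballI impI)
  fix q0 e assume q0: "q0 \<in> Q" and e: "e \<in> topspace (fst E)" and eq: "\<rho> e = H q0"
  have "\<rho> e \<in> U" using eq q0 HU by auto
  then obtain W g where sh: "sheet W U g" and eW: "e \<in> W"
    using sheet_over[OF U e] by blast
  have "continuous_map (top_of_set Q) (subtopology (fst B) U) H"
    using cH HU by (simp add: continuous_map_in_subtopology image_subset_iff Pi_iff)
  then have "continuous_map (top_of_set Q) (subtopology (fst E) W) (g \<circ> H)"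
    using local_iso_continuous[OF local_iso_sym[OF sh]] by (rule continuous_map_compose)
  then have "continuous_map (top_of_set Q) (fst E) (g \<circ> H)"
    by (simp add: continuous_map_in_subtopology)
  moreover have "\<forall>q\<in>Q. \<rho> ((g \<circ> H) q) = H q" using local_iso_inverse(2)[OF sh] HU by auto
  moreover have "(g \<circ> H) q0 = e" using eq local_iso_inverse(1)[OF sh eW] by simp
  ultimately show "\<exists>f. continuous_map (top_of_set Q) (fst E) f \<and> (\<forall>q\<in>Q. \<rho> (f q) = H q) \<and> f q0 = e"
    by blast
qed

text \<open>Gluing lifts over two closed sets with connected nonempty overlap, starting in the first:
  lift on Q1 through the given point, then on Q2 through a common point of the overlap; by
  unique lifting the two lifts agree on the overlap.\<close>
lemma lifts_on_Un_aux:
  assumes cl: "closed Q1" "closed Q2" and conn: "connected (Q1 \<inter> Q2)" "Q1 \<inter> Q2 \<noteq> {}"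
    and L1: "lifts_on H Q1" and L2: "lifts_on H Q2"
    and q0: "q0 \<in> Q1" and e: "e \<in> topspace (fst E)" "\<rho> e = H q0"
  shows "\<exists>f. continuous_map (top_of_set (Q1 \<union> Q2)) (fst E) f \<and> (\<forall>q\<in>Q1 \<union> Q2. \<rho> (f q) = H q) \<and> f q0 = e"
proof -
  obtain f1 where f1: "continuous_map (top_of_set Q1) (fst E) f1" "\<forall>q\<in>Q1. \<rho> (f1 q) = H q" "f1 q0 = e"
    using L1 q0 e unfolding lifts_on_def by blast
  obtain q1 where q1: "q1 \<in> Q1" "q1 \<in> Q2" using conn(2) by blast
  have "f1 q1 \<in> topspace (fst E)" using continuous_map_image_subset_topspace[OF f1(1)] q1(1) by auto
  then obtain f2 where f2: "continuous_map (top_of_set Q2) (fst E) f2" "\<forall>q\<in>Q2. \<rho> (f2 q) = H q"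
      "f2 q1 = f1 q1"
    using L2 q1 f1(2) unfolding lifts_on_def by blast
  have restrict: "continuous_map (top_of_set (Q1 \<inter> Q2)) (fst E) f"
    if "continuous_map (top_of_set Q) (fst E) f" "Q1 \<inter> Q2 \<subseteq> Q" for f Q
    using continuous_map_from_subtopology[OF that(1), of "Q1 \<inter> Q2"] that(2)
    by (simp add: subtopology_subtopology Int_absorb1)
  have "\<forall>x\<in>topspace (top_of_set (Q1 \<inter> Q2)). f1 x = f2 x"
  proof (rule lifts_unique)
    show "connected_space (top_of_set (Q1 \<inter> Q2))"
      using conn(1) by (simp add: connected_space_subtopology connectedin_iff_connected)
  qed (use restrict[OF f1(1)] restrict[OF f2(1)] f1(2) f2(2,3) q1 in auto)
  then have agree: "\<And>x. x \<in> Q1 \<inter> Q2 \<Longrightarrow> f1 x = f2 x" by simp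
  show ?thesis
  proof (intro exI conjI)
    show "continuous_map (top_of_set (Q1 \<union> Q2)) (fst E) (\<lambda>x. if x \<in> Q1 then f1 x else f2 x)"
      using continuous_map_glue_closed[OF cl f1(1) f2(1) agree] .
  qed (use f1 f2 q0 in auto)
qed

lemma lifts_on_Un:
  assumes "closed Q1" "closed Q2" "connected (Q1 \<inter> Q2)" "Q1 \<inter> Q2 \<noteq> {}"
    and "lifts_on H Q1" "lifts_on H Q2"
  shows "lifts_on H (Q1 \<union> Q2)"
  unfolding lifts_on_def
proof (intro ballI impI)
  fix q0 e assume q0: "q0 \<in> Q1 \<union> Q2" and e: "e \<in> topspace (fst E)" "\<rho> e = H q0"
  show "\<exists>f. continuous_map (top_of_set (Q1 \<union> Q2)) (fst E) f \<and> (\<forall>q\<in>Q1 \<union> Q2. \<rho> (f q) = H q) \<and> f q0 = e"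
  proof (cases "q0 \<in> Q1")
    case True
    then show ?thesis using lifts_on_Un_aux[OF assms True e] by blast
  next
    case False
    then have "q0 \<in> Q2" using q0 by blast
    then show ?thesis
      using lifts_on_Un_aux[of Q2 Q1 H q0 e] assms e by (simp add: Int_commute Un_commute)
  qed
qed

lemma lifts_on_rectangles_Un1:
  fixes a m b c d :: real
  assumes "a \<le> m" "m \<le> b" "c \<le> d"
    and "lifts_on H ({a..m} \<times> {c..d})" "lifts_on H ({m..b} \<times> {c..d})"
  shows "lifts_on H ({a..b} \<times> {c..d})"
proof -
  have "{a..m} \<times> {c..d} \<inter> {m..b} \<times> {c..d} = {m} \<times> {c..d}" using assms by auto
  moreover have "{a..m} \<times> {c..d} \<union> {m..b} \<times> {c..d} = {a..b} \<times> {c..d}" using assms by auto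
  ultimately show ?thesis
    using lifts_on_Un[of "{a..m} \<times> {c..d}" "{m..b} \<times> {c..d}" H] assms
    by (simp add: closed_Times connected_Times)
qed

lemma lifts_on_rectangles_Un2:
  fixes a m b c d :: real
  assumes "c \<le> m" "m \<le> d" "a \<le> b"
    and "lifts_on H ({a..b} \<times> {c..m})" "lifts_on H ({a..b} \<times> {m..d})"
  shows "lifts_on H ({a..b} \<times> {c..d})"
proof -
  have "{a..b} \<times> {c..m} \<inter> {a..b} \<times> {m..d} = {a..b} \<times> {m}" using assms by auto
  moreover have "{a..b} \<times> {c..m} \<union> {a..b} \<times> {m..d} = {a..b} \<times> {c..d}" using assms by auto
  ultimately show ?thesis
    using lifts_on_Un[of "{a..b} \<times> {c..m}" "{a..b} \<times> {m..d}" H] assms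
    by (simp add: closed_Times connected_Times)
qed

text \<open>Lifting on the unit square by subdivision: if lifts exist over all small rectangles, glue
  them first along horizontal strips, then the strips into the square.\<close>
lemma lifts_on_unit_square_subdivision:
  fixes H :: "real \<times> real \<Rightarrow> 'b"
  assumes "0 < \<eta>"
    and rectangle: "\<And>a b c d. 0 \<le> a \<Longrightarrow> a \<le> b \<Longrightarrow> b \<le> 1 \<Longrightarrow> 0 \<le> c \<Longrightarrow> c \<le> d \<Longrightarrow> d \<le> 1 \<Longrightarrow>
        b - a \<le> \<eta> \<Longrightarrow> d - c \<le> \<eta> \<Longrightarrow> lifts_on H ({a..b} \<times> {c..d})"
  shows "lifts_on H ({0..1} \<times> {0..1})"
proof -
  have strip: "lifts_on H ({0..1} \<times> {c..d})" if "0 \<le> c" "c \<le> d" "d \<le> 1" "d - c \<le> \<eta>" for c d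
  proof -
    have "(0::real) \<le> 0 \<longrightarrow> (1::real) \<le> 1 \<longrightarrow> lifts_on H ({0..1} \<times> {c..d})"
    proof (rule real_interval_subdivision_induct[where \<eta> = \<eta> and P = "\<lambda>a b. 0 \<le> a \<longrightarrow> b \<le> 1 \<longrightarrow> lifts_on H ({a..b} \<times> {c..d})"])
      fix a b :: real assume "a \<le> b" "b - a \<le> \<eta>"
      then show "0 \<le> a \<longrightarrow> b \<le> 1 \<longrightarrow> lifts_on H ({a..b} \<times> {c..d})" using rectangle that by blast
    next
      fix a m b :: real assume "a \<le> m" "m \<le> b" "0 \<le> a \<longrightarrow> m \<le> 1 \<longrightarrow> lifts_on H ({a..m} \<times> {c..d})"
        "0 \<le> m \<longrightarrow> b \<le> 1 \<longrightarrow> lifts_on H ({m..b} \<times> {c..d})"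
      then show "0 \<le> a \<longrightarrow> b \<le> 1 \<longrightarrow> lifts_on H ({a..b} \<times> {c..d})"
        using lifts_on_rectangles_Un1[of a m b c d H] that by auto
    qed (use \<open>0 < \<eta>\<close> in auto)
    then show ?thesis by simp
  qed
  have "(0::real) \<le> 0 \<longrightarrow> (1::real) \<le> 1 \<longrightarrow> lifts_on H ({0..1} \<times> {0..1})"
  proof (rule real_interval_subdivision_induct[where \<eta> = \<eta> and P = "\<lambda>c d. 0 \<le> c \<longrightarrow> d \<le> 1 \<longrightarrow> lifts_on H ({0..1} \<times> {c..d})"])
    fix c d :: real assume "c \<le> d" "d - c \<le> \<eta>"
    then show "0 \<le> c \<longrightarrow> d \<le> 1 \<longrightarrow> lifts_on H ({0..1} \<times> {c..d})" using strip by blast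
  next
    fix c m d :: real assume "c \<le> m" "m \<le> d" "0 \<le> c \<longrightarrow> m \<le> 1 \<longrightarrow> lifts_on H ({0..1} \<times> {c..m})"
      "0 \<le> m \<longrightarrow> d \<le> 1 \<longrightarrow> lifts_on H ({0..1} \<times> {m..d})"
    then show "0 \<le> c \<longrightarrow> d \<le> 1 \<longrightarrow> lifts_on H ({0..1} \<times> {c..d})"
      using lifts_on_rectangles_Un2[of c m d 0 1 H] by auto
  qed (use \<open>0 < \<eta>\<close> in auto)
  then show ?thesis by simp
qed

text \<open>Every continuous map from the unit square into B has the lifting property: by a Lebesgue
  number for the evenly covered sets, small rectangles map into evenly covered sets.\<close>
lemma lifts_on_square:
  fixes H :: "real \<times> real \<Rightarrow> 'b"
  assumes cH: "continuous_map (top_of_set ({0..1} \<times> {0..1})) (fst B) H"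
  shows "lifts_on H ({0..1} \<times> {0..1})"
proof -
  let ?S = "{0..1::real} \<times> {0..1::real}"
  have cover: "\<And>b. b \<in> topspace (fst B) \<Longrightarrow> \<exists>U\<in>{U. evenly_covered U}. b \<in> U"
    using evenly_covered_nbhd by blast
  have opn: "\<And>U. U \<in> {U. evenly_covered U} \<Longrightarrow> openin (fst B) U"
    unfolding evenly_covered_def by blast
  obtain \<delta> where "0 < \<delta>"
    and small: "\<forall>T. T \<subseteq> ?S \<and> diameter T < \<delta> \<longrightarrow> (\<exists>U\<in>{U. evenly_covered U}. H ` T \<subseteq> U)"
    using Lebesgue_number_continuous_map[OF compact_Times[OF compact_Icc compact_Icc] _ cH cover opn]
    by auto
  show ?thesis
  proof (rule lifts_on_unit_square_subdivision[where \<eta> = "\<delta> / 3"])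
    show "0 < \<delta> / 3" using \<open>0 < \<delta>\<close> by simp
    fix a b c d :: real
    assume bounds: "0 \<le> a" "a \<le> b" "b \<le> 1" "0 \<le> c" "c \<le> d" "d \<le> 1" "b - a \<le> \<delta> / 3" "d - c \<le> \<delta> / 3"
    then have sub: "{a..b} \<times> {c..d} \<subseteq> ?S" by auto
    have "diameter ({a..b} \<times> {c..d}) \<le> (b - a) + (d - c)"
      using bounds by (intro diameter_rectangle_le) auto
    also have "\<dots> < \<delta>" using bounds \<open>0 < \<delta>\<close> by linarith
    finally obtain U where "evenly_covered U" "H ` ({a..b} \<times> {c..d}) \<subseteq> U"
      using small sub by blast
    moreover have "continuous_map (top_of_set ({a..b} \<times> {c..d})) (fst B) H"
      using continuous_map_from_subtopology[OF cH, of "{a..b} \<times> {c..d}"] sub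
      by (simp add: subtopology_subtopology Int_absorb1)
    ultimately show "lifts_on H ({a..b} \<times> {c..d})" by (rule lifts_on_evenly_covered)
  qed
qed

lemma dihomotopy_continuous:
  "dihomotopy X H \<Longrightarrow> continuous_map (top_of_set ({0..1} \<times> {0..1})) (fst X) H"
  unfolding dihomotopy_def by simp

text \<open>Existence of lifts of homotopies through dipaths, through any point over H q0: lift H
  continuously on the square; each slice is then a continuous lift of a dipath.\<close>
lemma dihomotopy_lift_exists:
  assumes H: "dihomotopy B H" and q0: "q0 \<in> {0..1} \<times> {0..1}"
    and e: "e \<in> topspace (fst E)" "\<rho> e = H q0"
  shows "\<exists>H'. dihomotopy E H' \<and> (\<forall>s\<in>{0..1}. \<forall>t\<in>{0..1}. \<rho> (H' (s, t)) = H (s, t)) \<and> H' q0 = e"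
proof -
  obtain f where f: "continuous_map (top_of_set ({0..1} \<times> {0..1})) (fst E) f"
      "\<forall>q\<in>{0..1} \<times> {0..1}. \<rho> (f q) = H q" "f q0 = e"
    using lifts_on_square[OF dihomotopy_continuous[OF H]] q0 e unfolding lifts_on_def by blast
  have "dipath E (\<lambda>t. f (s, t))" if s: "s \<in> {0..1}" for s
  proof (rule dipath_lift)
    have "continuous_map (top_of_set {0..1}) (top_of_set ({0..1} \<times> {0..1})) (\<lambda>t::real. (s, t))"
      using s by (auto intro!: continuous_intros)
    from continuous_map_compose[OF this f(1)] show "pathin (fst E) (\<lambda>t. f (s, t))"
      unfolding pathin_def o_def .
    show "dipath B (\<lambda>t. H (s, t))" using H s unfolding dihomotopy_def by blast
  qed (use f(2) s in auto)
  then have "dihomotopy E f" unfolding dihomotopy_def using f(1) by simp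
  then show ?thesis using f(2,3) by blast
qed

text \<open>Uniqueness of lifts of homotopies: the square is connected.\<close>
lemma dihomotopy_lift_unique:
  assumes H1: "dihomotopy E H1" and H2: "dihomotopy E H2"
    and same: "\<forall>s\<in>{0..1}. \<forall>t\<in>{0..1}. \<rho> (H1 (s, t)) = \<rho> (H2 (s, t))"
    and q0: "q0 \<in> {0..1} \<times> {0..1}" "H1 q0 = H2 q0"
  shows "\<forall>s\<in>{0..1}. \<forall>t\<in>{0..1}. H1 (s, t) = H2 (s, t)"
proof -
  have "\<forall>q\<in>topspace (top_of_set ({0..1::real} \<times> {0..1::real})). H1 q = H2 q"
  proof (rule lifts_unique[OF _ dihomotopy_continuous[OF H1] dihomotopy_continuous[OF H2]])
    show "connected_space (top_of_set ({0..1::real} \<times> {0..1::real}))"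
      by (simp add: connected_space_subtopology connectedin_iff_connected connected_Times)
  qed (use same q0 in auto)
  then show ?thesis by simp
qed

lemma dihomotopy_unique_lifting:
  fixes q0 :: "real \<times> real"
  assumes q0: "q0 \<in> {0..1} \<times> {0..1}"
  shows "\<forall>e\<in>topspace (fst E). \<forall>H. dihomotopy B H \<and> H q0 = \<rho> e \<longrightarrow>
        (\<exists>H'. dihomotopy E H' \<and> (\<forall>s\<in>{0..1}. \<forall>t\<in>{0..1}. \<rho> (H' (s, t)) = H (s, t)) \<and> H' q0 = e) \<and>
        (\<forall>H1 H2. dihomotopy E H1 \<and> (\<forall>s\<in>{0..1}. \<forall>t\<in>{0..1}. \<rho> (H1 (s, t)) = H (s, t)) \<and> H1 q0 = e
             \<and> dihomotopy E H2 \<and> (\<forall>s\<in>{0..1}. \<forall>t\<in>{0..1}. \<rho> (H2 (s, t)) = H (s, t)) \<and> H2 q0 = e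
             \<longrightarrow> (\<forall>s\<in>{0..1}. \<forall>t\<in>{0..1}. H1 (s, t) = H2 (s, t)))"
proof (intro ballI allI impI conjI)
  fix e H assume e: "e \<in> topspace (fst E)" and H: "dihomotopy B H \<and> H q0 = \<rho> e"
  show "\<exists>H'. dihomotopy E H' \<and> (\<forall>s\<in>{0..1}. \<forall>t\<in>{0..1}. \<rho> (H' (s, t)) = H (s, t)) \<and> H' q0 = e"
    using dihomotopy_lift_exists[OF _ q0 e] H by simp
next
  fix e H H1 H2 and s t :: real
  assume "e \<in> topspace (fst E)" "dihomotopy B H \<and> H q0 = \<rho> e"
    and "dihomotopy E H1 \<and> (\<forall>s\<in>{0..1}. \<forall>t\<in>{0..1}. \<rho> (H1 (s, t)) = H (s, t)) \<and> H1 q0 = e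
      \<and> dihomotopy E H2 \<and> (\<forall>s\<in>{0..1}. \<forall>t\<in>{0..1}. \<rho> (H2 (s, t)) = H (s, t)) \<and> H2 q0 = e"
    and "s \<in> {0..1}" "t \<in> {0..1}"
  then show "H1 (s, t) = H2 (s, t)" using dihomotopy_lift_unique[of H1 H2 q0] q0 by simp
qed

end

theorem mainTheorem12:
  fixes E :: "'e strm" and B :: "'b strm" and \<rho> :: "'e \<Rightarrow> 'b"
  assumes cov: "stream_covering E B \<rho>"
  shows "(path_ordered E \<longleftrightarrow> path_ordered B)
    \<and> (\<forall>e\<in>topspace (fst E). \<forall>H. dihomotopy B H \<and> H (0, 0) = \<rho> e \<longrightarrow>
          (\<exists>H'. dihomotopy E H' \<and> (\<forall>s\<in>{0..1}. \<forall>t\<in>{0..1}. \<rho> (H' (s, t)) = H (s, t))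
                \<and> H' (0, 0) = e) \<and>
          (\<forall>H1 H2. dihomotopy E H1 \<and> (\<forall>s\<in>{0..1}. \<forall>t\<in>{0..1}. \<rho> (H1 (s, t)) = H (s, t)) \<and> H1 (0, 0) = e
               \<and> dihomotopy E H2 \<and> (\<forall>s\<in>{0..1}. \<forall>t\<in>{0..1}. \<rho> (H2 (s, t)) = H (s, t)) \<and> H2 (0, 0) = e
               \<longrightarrow> (\<forall>s\<in>{0..1}. \<forall>t\<in>{0..1}. H1 (s, t) = H2 (s, t))))
    \<and> (\<forall>e\<in>topspace (fst E). \<forall>H. dihomotopy B H \<and> H (0, 1) = \<rho> e \<longrightarrow>
          (\<exists>H'. dihomotopy E H' \<and> (\<forall>s\<in>{0..1}. \<forall>t\<in>{0..1}. \<rho> (H' (s, t)) = H (s, t))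
                \<and> H' (0, 1) = e) \<and>
          (\<forall>H1 H2. dihomotopy E H1 \<and> (\<forall>s\<in>{0..1}. \<forall>t\<in>{0..1}. \<rho> (H1 (s, t)) = H (s, t)) \<and> H1 (0, 1) = e
               \<and> dihomotopy E H2 \<and> (\<forall>s\<in>{0..1}. \<forall>t\<in>{0..1}. \<rho> (H2 (s, t)) = H (s, t)) \<and> H2 (0, 1) = e
               \<longrightarrow> (\<forall>s\<in>{0..1}. \<forall>t\<in>{0..1}. H1 (s, t) = H2 (s, t))))"
proof -
  interpret covering E B \<rho> by (rule covering.intro[OF cov])
  have corners: "(0, 0) \<in> {0..1::real} \<times> {0..1::real}" "(0, 1) \<in> {0..1::real} \<times> {0..1::real}"
    by simp_all
  have "path_ordered E \<longleftrightarrow> path_ordered B" using path_ordered_up path_ordered_down by blast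
  then show ?thesis
    using dihomotopy_unique_lifting[OF corners(1)] dihomotopy_unique_lifting[OF corners(2)]
    by (intro conjI) assumption+
qed

end
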